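(* Let $\sigma : \mathcal{S} \to !A^\perp \parallel !B$ be a negative deterministic sequential innocent $\sim$-strategy, and let $s, s' \in S$ be such that $|[s]| = |[s']|$. Then the following are equivalent: (1) $\mathcal{P}(s) = \mathcal{P}(s')$; (2) the unique order-isomorphism $\theta : [s] \cong [s']$ is in the isomorphism family of $\mathcal{S}$; (3) the unique order-isomorphism $\theta : [s] \cong [s']$ is such that $\sigma\,\theta$ is in the isomorphism family of $!A^\perp \parallel !B$.
   Context: $e \rightarrow e'$ denotes immediate causal dependency ($e<e'$ with nothing strictly between). $A,B$ are negative arenas (countable forest-shaped, conflict-free, alternating esps with negative minimal events), and $!A$ is the tcg of index functions $\alpha:[a]\to\omega$ whose symmetry consists of the label-preserving order-isomorphisms between configurations; $\mathrm{lbl}\,\alpha=a$. A $\sim$-strategy is a map of essps which is courteous (if $s_1 \rightarrow s_2$ with $\mathrm{pol}(s_1)=+$ or $\mathrm{pol}(s_2)=-$ then $\sigma s_1 \rightarrow \sigma s_2$), strong-receptive and thin; negative means minimal events of $S$ are negative. Sequential innocent: backward sequential ($[s]$ totally ordered) and forward sequential (if $s \rightarrow s_1$, $s \rightarrow s_2$ with $s_1,s_2$ positive, then $[s_1]\cup[s_2]$ is not a configuration). Deterministic: every finite subset of $S$ is consistent. For $s\in S$ with $[s]$ the chain $s_0 \rightarrow s_1 \rightarrow\dots\rightarrow s_n=s$, $\mathcal{P}(s)$ is the pointing sequence $(\mathrm{lbl}(\sigma s_0),\dots,\mathrm{lbl}(\sigma s_n))$ in which $\mathrm{lbl}(\sigma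 s_i)$ points to $\mathrm{lbl}(\sigma s_j)$ if $\sigma s_j \rightarrow \sigma s_i$, or if $j=0$ and $\sigma s_i$ is minimal in $!A$. *)

theory Defs
  imports Main "HOL-Library.Countable_Set"
begin

definition event_structure :: "'e set \<Rightarrow> ('e \<Rightarrow> 'e \<Rightarrow> bool) \<Rightarrow> 'e set set \<Rightarrow> bool" where
  "event_structure E le Con \<longleftrightarrow>
     (\<forall>e e'. le e e' \<longrightarrow> e \<in> E \<and> e' \<in> E) \<and>
     (\<forall>e\<in>E. le e e) \<and>
     (\<forall>e e' e''. le e e' \<longrightarrow> le e' e'' \<longrightarrow> le e e'') \<and>
     (\<forall>e e'. le e e' \<longrightarrow> le e' e \<longrightarrow> e = e') \<and>
     (\<forall>e\<in>E. finite {e'. le e' e}) \<and>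
     (\<forall>X\<in>Con. finite X \<and> X \<subseteq> E) \<and>
     {} \<in> Con \<and>
     (\<forall>e\<in>E. {e} \<in> Con) \<and>
     (\<forall>X Y. Y \<in> Con \<longrightarrow> X \<subseteq> Y \<longrightarrow> X \<in> Con) \<and>
     (\<forall>X e e'. X \<in> Con \<longrightarrow> e \<in> X \<longrightarrow> le e' e \<longrightarrow> insert e' X \<in> Con)"

definition cause :: "('e \<Rightarrow> 'e \<Rightarrow> bool) \<Rightarrow> 'e \<Rightarrow> 'e set" where
  "cause le e = {e'. le e' e}"

definition downclosed :: "('e \<Rightarrow> 'e \<Rightarrow> bool) \<Rightarrow> 'e set \<Rightarrow> bool" where
  "downclosed le x \<longleftrightarrow> (\<forall>e\<in>x. \<forall>e'. le e' e \<longrightarrow> e' \<in> x)"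

definition conf :: "'e set \<Rightarrow> ('e \<Rightarrow> 'e \<Rightarrow> bool) \<Rightarrow> 'e set set \<Rightarrow> 'e set \<Rightarrow> bool" where
  "conf E le Con x \<longleftrightarrow> x \<subseteq> E \<and> finite x \<and> downclosed le x \<and> x \<in> Con"

definition imm :: "('e \<Rightarrow> 'e \<Rightarrow> bool) \<Rightarrow> 'e \<Rightarrow> 'e \<Rightarrow> bool" where
  "imm le e e' \<longleftrightarrow> le e e' \<and> e \<noteq> e' \<and>
     \<not> (\<exists>e''. le e e'' \<and> le e'' e' \<and> e'' \<noteq> e \<and> e'' \<noteq> e')"

definition is_min :: "('e \<Rightarrow> 'e \<Rightarrow> bool) \<Rightarrow> 'e \<Rightarrow> bool" where
  "is_min le e \<longleftrightarrow> (\<forall>e'. le e' e \<longrightarrow> e' = e)"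

definition bij_rel :: "('e \<times> 'f) set \<Rightarrow> 'e set \<Rightarrow> 'f set \<Rightarrow> bool" where
  "bij_rel \<theta> x y \<longleftrightarrow> \<theta> \<subseteq> x \<times> y \<and> (\<forall>a\<in>x. \<exists>!b. (a, b) \<in> \<theta>) \<and> (\<forall>b\<in>y. \<exists>!a. (a, b) \<in> \<theta>)"

definition order_pres :: "('e \<Rightarrow> 'e \<Rightarrow> bool) \<Rightarrow> ('f \<Rightarrow> 'f \<Rightarrow> bool) \<Rightarrow> ('e \<times> 'f) set \<Rightarrow> bool" where
  "order_pres le le' \<theta> \<longleftrightarrow> (\<forall>a b a' b'. (a, b) \<in> \<theta> \<longrightarrow> (a', b') \<in> \<theta> \<longrightarrow> (le a a' \<longleftrightarrow> le' b b'))"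

definition order_iso_rel :: "('e \<Rightarrow> 'e \<Rightarrow> bool) \<Rightarrow> ('e \<times> 'e) set \<Rightarrow> 'e set \<Rightarrow> 'e set \<Rightarrow> bool" where
  "order_iso_rel le \<theta> x y \<longleftrightarrow> bij_rel \<theta> x y \<and> order_pres le le \<theta>"

definition iso_family :: "'e set \<Rightarrow> ('e \<Rightarrow> 'e \<Rightarrow> bool) \<Rightarrow> 'e set set \<Rightarrow> ('e \<times> 'e) set set \<Rightarrow> bool" where
  "iso_family E le Con Iso \<longleftrightarrow>
     (\<forall>\<theta>\<in>Iso. conf E le Con (Domain \<theta>) \<and> conf E le Con (Range \<theta>) \<and>
               bij_rel \<theta> (Domain \<theta>) (Range \<theta>)) \<and>
     (\<forall>x. conf E le Con x \<longrightarrow> Id_on x \<in> Iso) \<and>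
     (\<forall>\<theta>\<in>Iso. \<theta>\<inverse> \<in> Iso) \<and>
     (\<forall>\<theta>\<in>Iso. \<forall>\<phi>\<in>Iso. Range \<theta> = Domain \<phi> \<longrightarrow> \<theta> O \<phi> \<in> Iso) \<and>
     (\<forall>\<theta>\<in>Iso. \<forall>x. conf E le Con x \<longrightarrow> x \<subseteq> Domain \<theta> \<longrightarrow> \<theta> \<inter> (x \<times> UNIV) \<in> Iso) \<and>
     (\<forall>\<theta>\<in>Iso. \<forall>x. conf E le Con x \<longrightarrow> Domain \<theta> \<subseteq> x \<longrightarrow>
                  (\<exists>\<theta>'\<in>Iso. \<theta> \<subseteq> \<theta>' \<and> Domain \<theta>' = x))"

definition ess :: "'e set \<Rightarrow> ('e \<Rightarrow> 'e \<Rightarrow> bool) \<Rightarrow> 'e set set \<Rightarrow> ('e \<times> 'e) set set \<Rightarrow> bool" where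
  "ess E le Con Iso \<longleftrightarrow> event_structure E le Con \<and> iso_family E le Con Iso"

(* Polarity: True = positive, False = negative.
   A negative arena: countable, forest-shaped, conflict-free (every finite set consistent),
   alternating esp whose minimal events are negative. *)
definition neg_arena :: "'a set \<Rightarrow> ('a \<Rightarrow> 'a \<Rightarrow> bool) \<Rightarrow> ('a \<Rightarrow> bool) \<Rightarrow> bool" where
  "neg_arena E le pol \<longleftrightarrow>
     event_structure E le {X. finite X \<and> X \<subseteq> E} \<and>
     countable E \<and>
     (\<forall>a\<in>E. \<forall>b c. le b a \<longrightarrow> le c a \<longrightarrow> le b c \<or> le c b) \<and>
     (\<forall>a a'. imm le a a' \<longrightarrow> pol a \<noteq> pol a') \<and>
     (\<forall>a\<in>E. is_min le a \<longrightarrow> \<not> pol a)"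

(* events of !A: index functions alpha : [a] \<rightarrow> \<omega>, as partial maps with domain [a] *)
definition bang_ev :: "'a set \<Rightarrow> ('a \<Rightarrow> 'a \<Rightarrow> bool) \<Rightarrow> ('a \<rightharpoonup> nat) set" where
  "bang_ev E le = {\<alpha>. \<exists>a\<in>E. dom \<alpha> = cause le a}"

definition bang_lbl :: "('a \<Rightarrow> 'a \<Rightarrow> bool) \<Rightarrow> ('a \<rightharpoonup> nat) \<Rightarrow> 'a" where
  "bang_lbl le \<alpha> = (THE a. dom \<alpha> = cause le a)"

definition bang_le :: "'a set \<Rightarrow> ('a \<Rightarrow> 'a \<Rightarrow> bool) \<Rightarrow> ('a \<rightharpoonup> nat) \<Rightarrow> ('a \<rightharpoonup> nat) \<Rightarrow> bool" where
  "bang_le E le \<alpha> \<beta> \<longleftrightarrow> \<alpha> \<in> bang_ev E le \<and> \<beta> \<in> bang_ev E le \<and>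
     le (bang_lbl le \<alpha>) (bang_lbl le \<beta>) \<and> \<alpha> = \<beta> |` cause le (bang_lbl le \<alpha>)"

definition bang_Con :: "'a set \<Rightarrow> ('a \<Rightarrow> 'a \<Rightarrow> bool) \<Rightarrow> ('a \<rightharpoonup> nat) set set" where
  "bang_Con E le = {X. finite X \<and> X \<subseteq> bang_ev E le}"

definition bang_iso :: "'a set \<Rightarrow> ('a \<Rightarrow> 'a \<Rightarrow> bool) \<Rightarrow> (('a \<rightharpoonup> nat) \<times> ('a \<rightharpoonup> nat)) set set" where
  "bang_iso E le = {\<theta>. \<exists>x y.
      conf (bang_ev E le) (bang_le E le) (bang_Con E le) x \<and>
      conf (bang_ev E le) (bang_le E le) (bang_Con E le) y \<and>
      order_iso_rel (bang_le E le) \<theta> x y \<and>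
      (\<forall>\<alpha> \<beta>. (\<alpha>, \<beta>) \<in> \<theta> \<longrightarrow> bang_lbl le \<beta> = bang_lbl le \<alpha>)}"

type_synonym ('a, 'b) gev = "('a \<rightharpoonup> nat) + ('b \<rightharpoonup> nat)"

definition G_ev :: "'a set \<Rightarrow> ('a \<Rightarrow> 'a \<Rightarrow> bool) \<Rightarrow> 'b set \<Rightarrow> ('b \<Rightarrow> 'b \<Rightarrow> bool) \<Rightarrow> ('a, 'b) gev set" where
  "G_ev EA leA EB leB = Inl ` bang_ev EA leA \<union> Inr ` bang_ev EB leB"

definition G_le :: "'a set \<Rightarrow> ('a \<Rightarrow> 'a \<Rightarrow> bool) \<Rightarrow> 'b set \<Rightarrow> ('b \<Rightarrow> 'b \<Rightarrow> bool) \<Rightarrow>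
    ('a, 'b) gev \<Rightarrow> ('a, 'b) gev \<Rightarrow> bool" where
  "G_le EA leA EB leB e e' = (case (e, e') of
      (Inl \<alpha>, Inl \<alpha>') \<Rightarrow> bang_le EA leA \<alpha> \<alpha>'
    | (Inr \<beta>, Inr \<beta>') \<Rightarrow> bang_le EB leB \<beta> \<beta>'
    | _ \<Rightarrow> False)"

definition G_Con :: "'a set \<Rightarrow> ('a \<Rightarrow> 'a \<Rightarrow> bool) \<Rightarrow> 'b set \<Rightarrow> ('b \<Rightarrow> 'b \<Rightarrow> bool) \<Rightarrow> ('a, 'b) gev set set" where
  "G_Con EA leA EB leB = {X. finite X \<and> X \<subseteq> G_ev EA leA EB leB}"

definition G_pol :: "('a \<Rightarrow> 'a \<Rightarrow> bool) \<Rightarrow> ('a \<Rightarrow> bool) \<Rightarrow> ('b \<Rightarrow> 'b \<Rightarrow> bool) \<Rightarrow> ('b \<Rightarrow> bool) \<Rightarrow>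
    ('a, 'b) gev \<Rightarrow> bool" where
  "G_pol leA polA leB polB e = (case e of
      Inl \<alpha> \<Rightarrow> \<not> polA (bang_lbl leA \<alpha>)
    | Inr \<beta> \<Rightarrow> polB (bang_lbl leB \<beta>))"

definition G_iso :: "'a set \<Rightarrow> ('a \<Rightarrow> 'a \<Rightarrow> bool) \<Rightarrow> 'b set \<Rightarrow> ('b \<Rightarrow> 'b \<Rightarrow> bool) \<Rightarrow>
    (('a, 'b) gev \<times> ('a, 'b) gev) set set" where
  "G_iso EA leA EB leB = {\<theta>. \<exists>\<theta>A\<in>bang_iso EA leA. \<exists>\<theta>B\<in>bang_iso EB leB.
      \<theta> = map_prod Inl Inl ` \<theta>A \<union> map_prod Inr Inr ` \<theta>B}"

definition G_lbl :: "('a \<Rightarrow> 'a \<Rightarrow> bool) \<Rightarrow> ('b \<Rightarrow> 'b \<Rightarrow> bool) \<Rightarrow> ('a, 'b) gev \<Rightarrow> 'a + 'b" where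
  "G_lbl leA leB e = (case e of Inl \<alpha> \<Rightarrow> Inl (bang_lbl leA \<alpha>) | Inr \<beta> \<Rightarrow> Inr (bang_lbl leB \<beta>))"

definition G_minA :: "'a set \<Rightarrow> ('a \<Rightarrow> 'a \<Rightarrow> bool) \<Rightarrow> ('a, 'b) gev \<Rightarrow> bool" where
  "G_minA EA leA e = (case e of Inl \<alpha> \<Rightarrow> \<alpha> \<in> bang_ev EA leA \<and> is_min (bang_le EA leA) \<alpha> | Inr _ \<Rightarrow> False)"

definition map_essp ::
  "'s set \<Rightarrow> ('s \<Rightarrow> 's \<Rightarrow> bool) \<Rightarrow> 's set set \<Rightarrow> ('s \<Rightarrow> bool) \<Rightarrow> ('s \<times> 's) set set \<Rightarrow>
   'g set \<Rightarrow> ('g \<Rightarrow> 'g \<Rightarrow> bool) \<Rightarrow> 'g set set \<Rightarrow> ('g \<Rightarrow> bool) \<Rightarrow> ('g \<times> 'g) set set \<Rightarrow>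
   ('s \<Rightarrow> 'g) \<Rightarrow> bool" where
  "map_essp ES leS ConS polS IsoS EG leG ConG polG IsoG \<sigma> \<longleftrightarrow>
     (\<forall>s\<in>ES. \<sigma> s \<in> EG) \<and>
     (\<forall>x. conf ES leS ConS x \<longrightarrow> conf EG leG ConG (\<sigma> ` x)) \<and>
     (\<forall>x. conf ES leS ConS x \<longrightarrow> inj_on \<sigma> x) \<and>
     (\<forall>s\<in>ES. polG (\<sigma> s) = polS s) \<and>
     (\<forall>\<theta>\<in>IsoS. map_prod \<sigma> \<sigma> ` \<theta> \<in> IsoG)"

definition courteous :: "('s \<Rightarrow> 's \<Rightarrow> bool) \<Rightarrow> ('s \<Rightarrow> bool) \<Rightarrow> ('g \<Rightarrow> 'g \<Rightarrow> bool) \<Rightarrow> ('s \<Rightarrow> 'g) \<Rightarrow> bool" where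
  "courteous leS polS leG \<sigma> \<longleftrightarrow>
     (\<forall>s1 s2. imm leS s1 s2 \<longrightarrow> (polS s1 \<or> \<not> polS s2) \<longrightarrow> imm leG (\<sigma> s1) (\<sigma> s2))"

definition strong_receptive ::
  "('s \<times> 's) set set \<Rightarrow> ('g \<Rightarrow> bool) \<Rightarrow> ('g \<times> 'g) set set \<Rightarrow> ('s \<Rightarrow> 'g) \<Rightarrow> bool" where
  "strong_receptive IsoS polG IsoG \<sigma> \<longleftrightarrow>
     (\<forall>\<theta>\<in>IsoS. \<forall>a1 a2. \<not> polG a1 \<longrightarrow> \<not> polG a2 \<longrightarrow>
        a1 \<notin> Domain (map_prod \<sigma> \<sigma> ` \<theta>) \<longrightarrow>
        insert (a1, a2) (map_prod \<sigma> \<sigma> ` \<theta>) \<in> IsoG \<longrightarrow>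
        (\<exists>!p. fst p \<notin> Domain \<theta> \<and> insert p \<theta> \<in> IsoS \<and> \<sigma> (fst p) = a1 \<and> \<sigma> (snd p) = a2))"

definition thin :: "('s \<Rightarrow> bool) \<Rightarrow> ('s \<times> 's) set set \<Rightarrow> bool" where
  "thin polS IsoS \<longleftrightarrow>
     (\<forall>\<theta>\<in>IsoS. \<forall>s t t'. polS s \<longrightarrow> s \<notin> Domain \<theta> \<longrightarrow>
        insert (s, t) \<theta> \<in> IsoS \<longrightarrow> insert (s, t') \<theta> \<in> IsoS \<longrightarrow> t = t')"

definition tilde_strategy ::
  "'s set \<Rightarrow> ('s \<Rightarrow> 's \<Rightarrow> bool) \<Rightarrow> 's set set \<Rightarrow> ('s \<Rightarrow> bool) \<Rightarrow> ('s \<times> 's) set set \<Rightarrow>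
   'g set \<Rightarrow> ('g \<Rightarrow> 'g \<Rightarrow> bool) \<Rightarrow> 'g set set \<Rightarrow> ('g \<Rightarrow> bool) \<Rightarrow> ('g \<times> 'g) set set \<Rightarrow>
   ('s \<Rightarrow> 'g) \<Rightarrow> bool" where
  "tilde_strategy ES leS ConS polS IsoS EG leG ConG polG IsoG \<sigma> \<longleftrightarrow>
     ess ES leS ConS IsoS \<and>
     map_essp ES leS ConS polS IsoS EG leG ConG polG IsoG \<sigma> \<and>
     courteous leS polS leG \<sigma> \<and>
     strong_receptive IsoS polG IsoG \<sigma> \<and>
     thin polS IsoS"

definition negative_strat :: "'s set \<Rightarrow> ('s \<Rightarrow> 's \<Rightarrow> bool) \<Rightarrow> ('s \<Rightarrow> bool) \<Rightarrow> bool" where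
  "negative_strat ES leS polS \<longleftrightarrow> (\<forall>s\<in>ES. is_min leS s \<longrightarrow> \<not> polS s)"

definition deterministic :: "'s set \<Rightarrow> 's set set \<Rightarrow> bool" where
  "deterministic ES ConS \<longleftrightarrow> (\<forall>X. finite X \<longrightarrow> X \<subseteq> ES \<longrightarrow> X \<in> ConS)"

definition backward_sequential :: "'s set \<Rightarrow> ('s \<Rightarrow> 's \<Rightarrow> bool) \<Rightarrow> bool" where
  "backward_sequential ES leS \<longleftrightarrow>
     (\<forall>s\<in>ES. \<forall>a b. leS a s \<longrightarrow> leS b s \<longrightarrow> leS a b \<or> leS b a)"

definition forward_sequential :: "'s set \<Rightarrow> ('s \<Rightarrow> 's \<Rightarrow> bool) \<Rightarrow> 's set set \<Rightarrow> ('s \<Rightarrow> bool) \<Rightarrow> bool" where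
  "forward_sequential ES leS ConS polS \<longleftrightarrow>
     (\<forall>s s1 s2. imm leS s s1 \<longrightarrow> imm leS s s2 \<longrightarrow> s1 \<noteq> s2 \<longrightarrow> polS s1 \<longrightarrow> polS s2 \<longrightarrow>
        \<not> conf ES leS ConS (cause leS s1 \<union> cause leS s2))"

definition sequential_innocent :: "'s set \<Rightarrow> ('s \<Rightarrow> 's \<Rightarrow> bool) \<Rightarrow> 's set set \<Rightarrow> ('s \<Rightarrow> bool) \<Rightarrow> bool" where
  "sequential_innocent ES leS ConS polS \<longleftrightarrow>
     backward_sequential ES leS \<and> forward_sequential ES leS ConS polS"

(* the i-th element s_i of the chain [s] = s_0 \<rightarrow> s_1 \<rightarrow> ... \<rightarrow> s_n = s *)
definition chain_at :: "('s \<Rightarrow> 's \<Rightarrow> bool) \<Rightarrow> 's \<Rightarrow> nat \<Rightarrow> 's" where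
  "chain_at leS s i = (THE e. leS e s \<and> card (cause leS e) = Suc i)"

(* P(s): the list of labels lbl(\<sigma> s_i) together with the pointer relation:
   (i, j) in the relation means that lbl(\<sigma> s_i) points to lbl(\<sigma> s_j) *)
definition pointing_seq ::
  "'a set \<Rightarrow> ('a \<Rightarrow> 'a \<Rightarrow> bool) \<Rightarrow> 'b set \<Rightarrow> ('b \<Rightarrow> 'b \<Rightarrow> bool) \<Rightarrow>
   ('s \<Rightarrow> 's \<Rightarrow> bool) \<Rightarrow> ('s \<Rightarrow> ('a, 'b) gev) \<Rightarrow> 's \<Rightarrow> ('a + 'b) list \<times> (nat \<times> nat) set" where
  "pointing_seq EA leA EB leB leS \<sigma> s =
    (let n = card (cause leS s); c = chain_at leS s in
     (map (\<lambda>i. G_lbl leA leB (\<sigma> (c i))) [0..<n],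
      {(i, j). i < n \<and> j < n \<and>
        (imm (G_le EA leA EB leB) (\<sigma> (c j)) (\<sigma> (c i)) \<or> (j = 0 \<and> G_minA EA leA (\<sigma> (c i))))}))"

definition chain_iso :: "('s \<Rightarrow> 's \<Rightarrow> bool) \<Rightarrow> 's \<Rightarrow> 's \<Rightarrow> ('s \<times> 's) set" where
  "chain_iso leS s s' = (THE \<theta>. order_iso_rel leS \<theta> (cause leS s) (cause leS s'))"

end

theory Submission
  imports Defs
begin

text \<open>By backward sequentiality \<open>[s]\<close> and \<open>[s']\<close> are chains whose \<open>i\<close>-th events are
  those with causal histories of size \<open>i + 1\<close>, and the unique order-isomorphism pairs them.
  Strategies preserve symmetry, giving (2) \<open>\<Longrightarrow>\<close> (3). A symmetry of the game preserves
  labels, immediate causality and minimality between downclosed sets, which is all a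
  pointing sequence records: (3) \<open>\<Longrightarrow>\<close> (1). For (1) \<open>\<Longrightarrow>\<close> (2) the symmetry is built along
  the chains. At a negative step the extended pairing is a symmetry of the game, by
  courtesy and the forest shape of the arenas, and strong receptivity lifts it to \<open>S\<close>.
  At a positive step any extension of the symmetry to the next causal history sends the
  next event to a positive immediate successor of the previous event of the other chain,
  which by forward sequentiality and determinism is the next event of that chain.\<close>

section \<open>Event structures and chains\<close>

lemma event_structureD:
  assumes "event_structure E le Con"
  shows event_structure_le_E: "le e e' \<Longrightarrow> e \<in> E \<and> e' \<in> E"
    and event_structure_refl: "e \<in> E \<Longrightarrow> le e e"
    and event_structure_trans: "le e e' \<Longrightarrow> le e' e'' \<Longrightarrow> le e e''"
    and event_structure_antisym: "le e e' \<Longrightarrow> le e' e \<Longrightarrow> e = e'"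
    and event_structure_finite_cause: "e \<in> E \<Longrightarrow> finite (cause le e)"
  using assms unfolding event_structure_def cause_def by meson+

lemma event_structure_Con_subset: "event_structure E le Con \<Longrightarrow> Y \<in> Con \<Longrightarrow> X \<subseteq> Y \<Longrightarrow> X \<in> Con"
  unfolding event_structure_def by blast

lemma downclosed_cause: "event_structure E le Con \<Longrightarrow> downclosed le (cause le e)"
  using event_structure_trans by (fastforce simp: downclosed_def cause_def)

lemma bij_relD:
  assumes "bij_rel \<theta> x y"
  shows bij_rel_subset: "\<theta> \<subseteq> x \<times> y"
    and bij_rel_left_total: "a \<in> x \<Longrightarrow> \<exists>b. (a, b) \<in> \<theta>"
    and bij_rel_surj: "b \<in> y \<Longrightarrow> \<exists>a. (a, b) \<in> \<theta>"
    and bij_rel_functional: "(a, b) \<in> \<theta> \<Longrightarrow> (a, b') \<in> \<theta> \<Longrightarrow> b = b'"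
    and bij_rel_inj: "(a, b) \<in> \<theta> \<Longrightarrow> (a', b) \<in> \<theta> \<Longrightarrow> a = a'"
    and bij_rel_Domain: "Domain \<theta> = x"
    and bij_rel_Range: "Range \<theta> = y"
  using assms unfolding bij_rel_def by blast+

lemma bij_rel_card:
  assumes "bij_rel \<theta> x y"
  shows "card x = card y"
proof -
  have "bij_betw fst \<theta> x" "bij_betw snd \<theta> y"
    using assms unfolding bij_rel_def bij_betw_def inj_on_def by force+
  then show ?thesis using bij_betw_same_card by metis
qed

lemma order_iso_rel_card_cause:
  assumes iso: "order_iso_rel le T X Y" and dX: "downclosed le X" and dY: "downclosed le Y"
    and xy: "(x, y) \<in> T"
  shows "card (cause le x) = card (cause le y)"
proof (rule bij_rel_card)
  have bij: "bij_rel T X Y" and pres: "order_pres le le T"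
    using iso by (auto simp: order_iso_rel_def)
  have "x \<in> X" "y \<in> Y" using bij xy by (auto simp: bij_rel_def)
  then have sub: "cause le x \<subseteq> X" "cause le y \<subseteq> Y"
    using dX dY by (auto simp: downclosed_def cause_def)
  have below: "(u, w) \<in> T \<Longrightarrow> le u x \<longleftrightarrow> le w y" for u w
    using pres xy by (simp add: order_pres_def)
  show "bij_rel (T \<inter> (cause le x \<times> UNIV)) (cause le x) (cause le y)"
    unfolding bij_rel_def
  proof (intro conjI ballI)
    show "T \<inter> (cause le x \<times> UNIV) \<subseteq> cause le x \<times> cause le y"
    proof
      fix p assume "p \<in> T \<inter> (cause le x \<times> UNIV)"
      then show "p \<in> cause le x \<times> cause le y"
        using below[of "fst p" "snd p"] by (auto simp: cause_def)
    qed
    show "\<exists>!w. (u, w) \<in> T \<inter> (cause le x \<times> UNIV)" if "u \<in> cause le x" for u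
    proof -
      have "u \<in> X" using sub that by blast
      then obtain w where "(u, w) \<in> T" using bij_rel_left_total[OF bij] by blast
      then show ?thesis using that bij_rel_functional[OF bij] by auto
    qed
    show "\<exists>!u. (u, w) \<in> T \<inter> (cause le x \<times> UNIV)" if "w \<in> cause le y" for w
    proof -
      have "w \<in> Y" using sub that by blast
      then obtain u where u: "(u, w) \<in> T" using bij_rel_surj[OF bij] by blast
      moreover have "u \<in> cause le x" using below[OF u] that by (simp add: cause_def)
      ultimately show ?thesis using bij_rel_inj[OF bij] by auto
    qed
  qed
qed

lemma imm_if_cause_eq_insert:
  assumes es: "event_structure E le Con" and u: "u \<in> E"
    and eq: "cause le t = insert t (cause le u)" and t: "t \<notin> cause le u"
  shows "imm le u t"
proof -
  have "u \<in> cause le u" using event_structure_refl[OF es u] by (simp add: cause_def)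
  then have "le u t" "u \<noteq> t" using eq t by (auto simp: cause_def)
  moreover have "e = u \<or> e = t" if "le u e" "le e t" for e
  proof -
    have "e = t \<or> le e u" using eq that(2) by (auto simp: cause_def)
    then show ?thesis using event_structure_antisym[OF es] that(1) by blast
  qed
  ultimately show ?thesis by (auto simp: imm_def)
qed

lemma order_pres_converse: "order_pres le le \<theta> \<Longrightarrow> order_pres le le (\<theta>\<inverse>)"
  by (auto simp: order_pres_def)

lemma order_pres_imm:
  assumes pres: "order_pres L L \<phi>" and refl: "reflp_on (Field \<phi>) L" and antisym: "antisymp L"
    and down: "downclosed L (Range \<phi>)"
    and ab: "(a, b) \<in> \<phi>" and ab': "(a', b') \<in> \<phi>" and imm: "imm L a a'"
  shows "imm L b b'"
proof -
  have iff: "(u, w) \<in> \<phi> \<Longrightarrow> (u', w') \<in> \<phi> \<Longrightarrow> L u u' \<longleftrightarrow> L w w'" for u w u' w'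
    using pres by (simp add: order_pres_def)
  have refl': "(u, w) \<in> \<phi> \<Longrightarrow> L u u \<and> L w w" for u w
    using refl by (auto simp: reflp_on_def Field_def)
  have inj: "u = u'" if "(u, w) \<in> \<phi>" "(u', w) \<in> \<phi>" for u u' w
    using iff[OF that] iff[OF that(2,1)] refl'[OF that(1)] antisympD[OF antisym] by blast
  have functional: "w = w'" if "(u, w) \<in> \<phi>" "(u, w') \<in> \<phi>" for u w w'
    using iff[OF that] iff[OF that(2,1)] refl'[OF that(1)] antisympD[OF antisym] by blast
  have "L b b'" "b \<noteq> b'" using imm iff[OF ab ab'] inj[of a b a'] ab ab' by (auto simp: imm_def)
  moreover have False if z: "L b z" "L z b'" "z \<noteq> b" "z \<noteq> b'" for z
  proof -
    obtain u where u: "(u, z) \<in> \<phi>" using down z(2) ab' by (auto simp: downclosed_def)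
    have "L a u" "L u a'" using iff[OF ab u] iff[OF u ab'] z by auto
    moreover have "u \<noteq> a" "u \<noteq> a'" using functional u ab ab' z by blast+
    ultimately show False using imm by (auto simp: imm_def)
  qed
  ultimately show ?thesis by (auto simp: imm_def)
qed

lemma order_pres_is_min:
  assumes pres: "order_pres L L \<phi>" and refl: "reflp_on (Field \<phi>) L" and antisym: "antisymp L"
    and down: "downclosed L (Range \<phi>)"
    and ab: "(a, b) \<in> \<phi>" and min: "is_min L a"
  shows "is_min L b"
  unfolding is_min_def
proof (intro allI impI)
  fix z assume z: "L z b"
  then obtain u where u: "(u, z) \<in> \<phi>" using down ab by (auto simp: downclosed_def)
  then have "L u a" using pres ab z by (auto simp: order_pres_def)
  then have "u = a" using min by (simp add: is_min_def)
  moreover have "L a a" using refl ab by (auto simp: reflp_on_def Field_def)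
  ultimately have "L b z" using pres ab u unfolding order_pres_def by blast
  then show "z = b" using z antisympD[OF antisym] by blast
qed

lemma order_pres_imm_iff:
  assumes "order_pres L L \<phi>" "reflp_on (Field \<phi>) L" "antisymp L"
    and "downclosed L (Domain \<phi>)" "downclosed L (Range \<phi>)" "(a, b) \<in> \<phi>" "(a', b') \<in> \<phi>"
  shows "imm L a a' \<longleftrightarrow> imm L b b'"
proof
  show "imm L a a' \<Longrightarrow> imm L b b'" using order_pres_imm assms by metis
  show "imm L b b' \<Longrightarrow> imm L a a'"
    using order_pres_imm[OF order_pres_converse[OF assms(1)]] assms by simp
qed

lemma order_pres_is_min_iff:
  assumes "order_pres L L \<phi>" "reflp_on (Field \<phi>) L" "antisymp L"
    and "downclosed L (Domain \<phi>)" "downclosed L (Range \<phi>)" "(a, b) \<in> \<phi>"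
  shows "is_min L a \<longleftrightarrow> is_min L b"
proof
  show "is_min L a \<Longrightarrow> is_min L b" using order_pres_is_min assms by metis
  show "is_min L b \<Longrightarrow> is_min L a"
    using order_pres_is_min[OF order_pres_converse[OF assms(1)]] assms by simp
qed

lemma order_iso_rel_insert:
  assumes iso: "order_iso_rel L \<theta> x y" and new: "a \<notin> x" "a' \<notin> y"
    and down: "downclosed L x" "downclosed L y" and refl: "L a a" "L a' a'"
    and ord: "\<And>b b'. (b, b') \<in> \<theta> \<Longrightarrow> L b a \<longleftrightarrow> L b' a'"
  shows "order_iso_rel L (insert (a, a') \<theta>) (insert a x) (insert a' y)"
proof -
  have bij: "bij_rel \<theta> x y" and pres: "order_pres L L \<theta>" using iso by (auto simp: order_iso_rel_def)
  have above: "\<not> L a b" "\<not> L a' b'" if "(b, b') \<in> \<theta>" for b b'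
    using that bij_rel_subset[OF bij] down new unfolding downclosed_def by blast+
  have "bij_rel (insert (a, a') \<theta>) (insert a x) (insert a' y)"
    using bij new unfolding bij_rel_def by blast
  moreover have "order_pres L L (insert (a, a') \<theta>)"
    using pres refl ord above unfolding order_pres_def by auto
  ultimately show ?thesis by (simp add: order_iso_rel_def)
qed

locale linear_cause =
  fixes E :: "'e set" and le :: "'e \<Rightarrow> 'e \<Rightarrow> bool" and Con :: "'e set set" and s :: 'e
  assumes es: "event_structure E le Con" and s_in_E: "s \<in> E"
    and linear: "\<And>a b. le a s \<Longrightarrow> le b s \<Longrightarrow> le a b \<or> le b a"
begin

abbreviation "n \<equiv> card (cause le s)"
abbreviation "c \<equiv> chain_at le s"

lemma finite_cause_below: "le e s \<Longrightarrow> finite (cause le e)"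
  using event_structure_finite_cause[OF es] event_structure_le_E[OF es] by blast

lemma self_in_cause_below: "le e s \<Longrightarrow> e \<in> cause le e"
  using event_structure_refl[OF es] event_structure_le_E[OF es] by (auto simp: cause_def)

lemma card_cause_less:
  assumes "le e s" "le e e'" "e \<noteq> e'" "le e' s"
  shows "card (cause le e) < card (cause le e')"
proof -
  have "cause le e \<subseteq> cause le e'"
    using assms(2) event_structure_trans[OF es] by (auto simp: cause_def)
  moreover have "e' \<in> cause le e' - cause le e"
    using assms self_in_cause_below[of e'] event_structure_antisym[OF es] by (auto simp: cause_def)
  ultimately have "cause le e \<subset> cause le e'" by blast
  then show ?thesis using finite_cause_below[OF assms(4)] by (simp add: psubset_card_mono)
qed

lemma inj_on_card_cause: "inj_on (\<lambda>e. card (cause le e)) (cause le s)"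
proof (rule inj_onI)
  fix x y assume "x \<in> cause le s" "y \<in> cause le s" "card (cause le x) = card (cause le y)"
  then show "x = y"
    using linear[of x y] card_cause_less[of x y] card_cause_less[of y x] by (auto simp: cause_def)
qed

lemma card_cause_image: "(\<lambda>e. card (cause le e)) ` cause le s = {1..n}"
proof -
  have "(\<lambda>e. card (cause le e)) ` cause le s \<subseteq> {1..n}"
  proof
    fix k assume "k \<in> (\<lambda>e. card (cause le e)) ` cause le s"
    then obtain e where e: "le e s" and k: "k = card (cause le e)" by (auto simp: cause_def)
    have "cause le e \<subseteq> cause le s" using e event_structure_trans[OF es] by (auto simp: cause_def)
    then have "k \<le> n"
      using k card_mono event_structure_finite_cause[OF es s_in_E] by blast
    moreover have "0 < k"
      using k self_in_cause_below[OF e] finite_cause_below[OF e] card_gt_0_iff by blast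
    ultimately show "k \<in> {1..n}" by simp
  qed
  then show ?thesis by (simp add: card_image[OF inj_on_card_cause] card_subset_eq)
qed

lemma ex1_chain_at: "i < n \<Longrightarrow> \<exists>!e. le e s \<and> card (cause le e) = Suc i"
proof -
  assume "i < n"
  then have "Suc i \<in> (\<lambda>e. card (cause le e)) ` cause le s" using card_cause_image by simp
  then obtain e where e: "e \<in> cause le s" "card (cause le e) = Suc i" by auto
  show ?thesis
  proof (rule ex1I[of _ e])
    fix y assume "le y s \<and> card (cause le y) = Suc i"
    then show "y = e" using inj_onD[OF inj_on_card_cause, of y e] e by (simp add: cause_def)
  qed (use e in \<open>simp add: cause_def\<close>)
qed

lemma chain_at_le: "i < n \<Longrightarrow> le (c i) s"
  and card_cause_chain_at: "i < n \<Longrightarrow> card (cause le (c i)) = Suc i"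
  unfolding chain_at_def using theI'[OF ex1_chain_at] by blast+

lemma chain_at_in_cause: "i < n \<Longrightarrow> c i \<in> cause le s"
  using chain_at_le by (simp add: cause_def)

lemma chain_at_in_E: "i < n \<Longrightarrow> c i \<in> E"
  using chain_at_le event_structure_le_E[OF es] by blast

lemma chain_at_eqI: "i < n \<Longrightarrow> le e s \<Longrightarrow> card (cause le e) = Suc i \<Longrightarrow> c i = e"
  using ex1_chain_at chain_at_le card_cause_chain_at by blast

lemma chain_at_inj: "i < n \<Longrightarrow> j < n \<Longrightarrow> c i = c j \<longleftrightarrow> i = j"
  using card_cause_chain_at by (metis Suc_inject)

lemma chain_at_surj: "le e s \<Longrightarrow> \<exists>i<n. c i = e"
proof -
  assume e: "le e s"
  then have "card (cause le e) \<in> {1..n}" using card_cause_image by (auto simp: cause_def)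
  then obtain i where "card (cause le e) = Suc i" "i < n" by (cases "card (cause le e)") auto
  then show ?thesis using chain_at_eqI e by blast
qed

lemma chain_at_le_iff: "i < n \<Longrightarrow> j < n \<Longrightarrow> le (c i) (c j) \<longleftrightarrow> i \<le> j"
proof -
  assume i: "i < n" and j: "j < n"
  have less: "le (c a) (c b) \<Longrightarrow> a \<noteq> b \<Longrightarrow> a < b" if "a < n" "b < n" for a b
    using card_cause_less[OF chain_at_le _ _ chain_at_le, of a b] chain_at_inj
      card_cause_chain_at that by simp
  show ?thesis
  proof
    assume "le (c i) (c j)"
    then show "i \<le> j" using less[OF i j] by fastforce
  next
    assume "i \<le> j"
    then show "le (c i) (c j)"
      using linear[OF chain_at_le[OF i] chain_at_le[OF j]] less[OF j i]
        event_structure_refl[OF es chain_at_in_E[OF i]] by fastforce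
  qed
qed

lemma cause_chain_at: "i < n \<Longrightarrow> cause le (c i) = c ` {..i}"
proof (intro equalityI subsetI)
  fix e assume i: "i < n" and "e \<in> cause le (c i)"
  then have e: "le e (c i)" by (simp add: cause_def)
  then obtain j where "j < n" "c j = e"
    using chain_at_surj event_structure_trans[OF es] chain_at_le[OF i] by blast
  then show "e \<in> c ` {..i}" using chain_at_le_iff[OF _ i] e by auto
qed (auto simp: cause_def chain_at_le_iff)

lemma imm_chain_at_Suc: "Suc i < n \<Longrightarrow> imm le (c i) (c (Suc i))"
proof (rule imm_if_cause_eq_insert[OF es chain_at_in_E])
  assume i: "Suc i < n"
  then show "cause le (c (Suc i)) = insert (c (Suc i)) (cause le (c i))"
    by (simp add: cause_chain_at atMost_Suc)
  show "c (Suc i) \<notin> cause le (c i)"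
    using i by (auto simp: cause_chain_at chain_at_inj)
qed simp

lemma is_min_chain_at_0: "0 < n \<Longrightarrow> is_min le (c 0)"
  using cause_chain_at[of 0] by (auto simp: is_min_def cause_def)

end

definition chain_prefix :: "('e \<Rightarrow> 'e \<Rightarrow> bool) \<Rightarrow> 'e \<Rightarrow> 'e \<Rightarrow> nat \<Rightarrow> ('e \<times> 'e) set" where
  "chain_prefix le s s' k = {(chain_at le s i, chain_at le s' i) | i. i < k}"

lemma chain_prefix_0: "chain_prefix le s s' 0 = {}"
  by (simp add: chain_prefix_def)

lemma chain_prefix_Suc:
  "chain_prefix le s s' (Suc k) =
    insert (chain_at le s k, chain_at le s' k) (chain_prefix le s s' k)"
  by (auto simp: chain_prefix_def less_Suc_eq)

lemma Domain_chain_prefix: "Domain (chain_prefix le s s' k) = chain_at le s ` {..<k}"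
  and Range_chain_prefix: "Range (chain_prefix le s s' k) = chain_at le s' ` {..<k}"
  by (auto simp: chain_prefix_def)

locale equal_height_chains = A: linear_cause E le Con s + B: linear_cause E le Con s'
  for E :: "'e set" and le Con s s' +
  assumes same_height: "card (cause le s) = card (cause le s')"
begin

abbreviation "n \<equiv> card (cause le s)"
abbreviation "c \<equiv> chain_at le s"
abbreviation "d \<equiv> chain_at le s'"

lemma order_iso_rel_chain_prefix:
  "order_iso_rel le (chain_prefix le s s' n) (cause le s) (cause le s')"
proof -
  have "bij_rel (chain_prefix le s s' n) (cause le s) (cause le s')"
    unfolding bij_rel_def
  proof (intro conjI ballI)
    show "chain_prefix le s s' n \<subseteq> cause le s \<times> cause le s'"
      using A.chain_at_in_cause B.chain_at_in_cause[unfolded same_height[symmetric]]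
      by (auto simp: chain_prefix_def)
    show "\<exists>!b. (a, b) \<in> chain_prefix le s s' n" if a: "a \<in> cause le s" for a
    proof -
      obtain i where "i < n" "a = c i" using A.chain_at_surj a unfolding cause_def by force
      then show ?thesis using A.chain_at_inj by (auto simp: chain_prefix_def)
    qed
    show "\<exists>!a. (a, b) \<in> chain_prefix le s s' n" if b: "b \<in> cause le s'" for b
    proof -
      have "le b s'" using b by (simp add: cause_def)
      then obtain i where "i < n" "b = d i" using B.chain_at_surj same_height by metis
      then show ?thesis using B.chain_at_inj same_height by (auto simp: chain_prefix_def)
    qed
  qed
  moreover have "order_pres le le (chain_prefix le s s' n)"
    using A.chain_at_le_iff B.chain_at_le_iff same_height
    by (auto simp: order_pres_def chain_prefix_def)
  ultimately show ?thesis by (simp add: order_iso_rel_def)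
qed

lemma order_iso_rel_eq_chain_prefix:
  assumes T: "order_iso_rel le T (cause le s) (cause le s')"
  shows "T = chain_prefix le s s' n"
proof -
  have bij: "bij_rel T (cause le s) (cause le s')" using T by (simp add: order_iso_rel_def)
  have image: "y = d i" if "(c i, y) \<in> T" "i < n" for i y
  proof (rule B.chain_at_eqI[symmetric])
    show "i < card (cause le s')" using that(2) same_height by simp
    show "le y s'" using bij_rel_subset[OF bij] that(1) by (auto simp: cause_def)
    show "card (cause le y) = Suc i"
      using order_iso_rel_card_cause[OF T downclosed_cause[OF A.es]
          downclosed_cause[OF A.es] that(1)] A.card_cause_chain_at[OF that(2)]
      by simp
  qed
  show ?thesis
  proof (intro equalityI subsetI)
    fix p assume p: "p \<in> T"
    then obtain x y where xy: "p = (x, y)" "x \<in> cause le s" using bij_rel_subset[OF bij] by auto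
    then obtain i where "i < n" "x = c i" using A.chain_at_surj by (auto simp: cause_def)
    then show "p \<in> chain_prefix le s s' n" using image p xy by (auto simp: chain_prefix_def)
  next
    fix p assume "p \<in> chain_prefix le s s' n"
    then obtain i where i: "i < n" "p = (c i, d i)" by (auto simp: chain_prefix_def)
    then obtain y where "(c i, y) \<in> T" using bij_rel_left_total[OF bij A.chain_at_in_cause] by blast
    then show "p \<in> T" using image i by auto
  qed
qed

lemma chain_iso_eq_chain_prefix: "chain_iso le s s' = chain_prefix le s s' n"
  unfolding chain_iso_def
  using order_iso_rel_chain_prefix order_iso_rel_eq_chain_prefix by (rule the_equality)

end

section \<open>Isomorphism families\<close>

lemma essD:
  assumes "ess E le Con Iso"
  shows ess_event_structure: "event_structure E le Con"
    and iso_conf_Domain: "\<theta> \<in> Iso \<Longrightarrow> conf E le Con (Domain \<theta>)"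
    and iso_conf_Range: "\<theta> \<in> Iso \<Longrightarrow> conf E le Con (Range \<theta>)"
    and iso_bij_rel: "\<theta> \<in> Iso \<Longrightarrow> bij_rel \<theta> (Domain \<theta>) (Range \<theta>)"
    and iso_Id_on: "conf E le Con x \<Longrightarrow> Id_on x \<in> Iso"
    and iso_converse: "\<theta> \<in> Iso \<Longrightarrow> \<theta>\<inverse> \<in> Iso"
    and iso_restrict: "\<theta> \<in> Iso \<Longrightarrow> conf E le Con x \<Longrightarrow> x \<subseteq> Domain \<theta> \<Longrightarrow> \<theta> \<inter> (x \<times> UNIV) \<in> Iso"
    and iso_extend: "\<theta> \<in> Iso \<Longrightarrow> conf E le Con x \<Longrightarrow> Domain \<theta> \<subseteq> x \<Longrightarrow> \<exists>\<theta>'\<in>Iso. \<theta> \<subseteq> \<theta>' \<and> Domain \<theta>' = x"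
  using assms unfolding ess_def iso_family_def by meson+

lemma conf_cause:
  assumes es: "event_structure E le Con" and x: "conf E le Con x" and t: "t \<in> x"
  shows "conf E le Con (cause le t)"
proof -
  have "cause le t \<subseteq> x" using x t by (auto simp: conf_def downclosed_def cause_def)
  moreover have "finite x" "x \<subseteq> E" "x \<in> Con" using x by (auto simp: conf_def)
  ultimately show ?thesis
    using event_structure_Con_subset[OF es] downclosed_cause[OF es] finite_subset
    by (auto simp: conf_def)
qed

lemma iso_extend_one:
  assumes ess: "ess E le Con Iso" and \<theta>: "\<theta> \<in> Iso"
    and conf: "conf E le Con (insert e (Domain \<theta>))" and e: "e \<notin> Domain \<theta>"
  obtains t where "insert (e, t) \<theta> \<in> Iso" and "t \<notin> Range \<theta>"
proof -
  obtain \<theta>' where \<theta>': "\<theta>' \<in> Iso" "\<theta> \<subseteq> \<theta>'" "Domain \<theta>' = insert e (Domain \<theta>)"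
    using iso_extend[OF ess \<theta> conf] by blast
  note bij = iso_bij_rel[OF ess \<theta>'(1)]
  obtain t where et: "(e, t) \<in> \<theta>'" using \<theta>'(3) by blast
  have "\<theta>' \<subseteq> insert (e, t) \<theta>"
  proof
    fix p assume p: "p \<in> \<theta>'"
    obtain a b where ab: "p = (a, b)" by (cases p)
    have "a \<in> insert e (Domain \<theta>)" using p ab \<theta>'(3) by (metis Domain.DomainI)
    then consider "a = e" | b' where "(a, b') \<in> \<theta>" by blast
    then show "p \<in> insert (e, t) \<theta>"
    proof cases
      case 1
      then show ?thesis using bij_rel_functional[OF bij et, of b] p ab by simp
    next
      case 2
      then show ?thesis using bij_rel_functional[OF bij, of a b b'] p ab \<theta>'(2) by blast
    qed
  qed
  then have "\<theta>' = insert (e, t) \<theta>" using et \<theta>'(2) by blast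
  moreover have "t \<notin> Range \<theta>"
  proof
    assume "t \<in> Range \<theta>"
    then obtain a where a: "(a, t) \<in> \<theta>" by blast
    then have "a = e" using bij_rel_inj[OF bij _ et] \<theta>'(2) by blast
    then show False using e a by blast
  qed
  ultimately show ?thesis using that \<theta>'(1) by blast
qed

text \<open>Restricting the inverse to the history of \<open>t\<close> gives a symmetry onto the whole domain,
  so the history of \<open>t\<close> is as large as the range.\<close>

lemma iso_Range_eq_cause:
  assumes ess: "ess E le Con Iso" and \<theta>: "\<theta> \<in> Iso"
    and dom: "Domain \<theta> = cause le e" and et: "(e, t) \<in> \<theta>"
  shows "Range \<theta> = cause le t"
proof -
  note es = ess_event_structure[OF ess]
  have conf: "conf E le Con (Range \<theta>)" using iso_conf_Range[OF ess \<theta>] .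
  have sub: "cause le t \<subseteq> Range \<theta>"
    using conf et by (force simp: conf_def downclosed_def cause_def)
  let ?\<rho> = "\<theta>\<inverse> \<inter> (cause le t \<times> UNIV)"
  have \<rho>: "?\<rho> \<in> Iso"
    using iso_restrict[OF ess iso_converse[OF ess \<theta>] conf_cause[OF es conf]] sub et by auto
  have "Range ?\<rho> = cause le e"
  proof
    show "Range ?\<rho> \<subseteq> cause le e" using dom by auto
    have "e \<in> Range ?\<rho>"
      using et event_structure_refl[OF es] conf by (auto simp: conf_def cause_def)
    then show "cause le e \<subseteq> Range ?\<rho>"
      using iso_conf_Range[OF ess \<rho>] by (auto simp: conf_def downclosed_def cause_def)
  qed
  moreover have "Domain ?\<rho> = cause le t" using sub by auto
  ultimately have "card (cause le t) = card (Range \<theta>)"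
    using bij_rel_card[OF iso_bij_rel[OF ess \<rho>]] bij_rel_card[OF iso_bij_rel[OF ess \<theta>]] dom
    by simp
  then show ?thesis using sub conf card_subset_eq[of "Range \<theta>" "cause le t"] by (simp add: conf_def)
qed

section \<open>The game \<open>!A\<^sup>\<bottom> \<parallel> !B\<close>\<close>

lemma restrict_map_dom: "m |` dom m = m"
  by (rule ext) (auto simp: restrict_map_def dom_def)

lemma bang_lbl_eq:
  assumes es: "event_structure E le Con" and a: "a \<in> E" and dom: "dom \<alpha> = cause le a"
  shows "bang_lbl le \<alpha> = a"
  unfolding bang_lbl_def
proof (rule the_equality)
  fix b assume b: "dom \<alpha> = cause le b"
  have "le a b" using event_structure_refl[OF es a] b dom by (auto simp: cause_def)
  moreover have "le b a"
    using event_structure_refl[OF es] event_structure_le_E[OF es calculation] b dom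
    by (auto simp: cause_def)
  ultimately show "b = a" using event_structure_antisym[OF es] by blast
qed (rule dom)

lemma bang_ev_lbl:
  assumes "event_structure E le Con" and "\<alpha> \<in> bang_ev E le"
  shows "bang_lbl le \<alpha> \<in> E" and "dom \<alpha> = cause le (bang_lbl le \<alpha>)"
  using assms bang_lbl_eq unfolding bang_ev_def by fastforce+

lemma bang_le_refl:
  assumes es: "event_structure E le Con" and "\<alpha> \<in> bang_ev E le"
  shows "bang_le E le \<alpha> \<alpha>"
  using assms bang_ev_lbl[OF es] event_structure_refl[OF es] restrict_map_dom[of \<alpha>]
  by (simp add: bang_le_def)

lemma bang_le_antisym:
  assumes es: "event_structure E le Con" and "bang_le E le \<alpha> \<beta>" "bang_le E le \<beta> \<alpha>"
  shows "\<alpha> = \<beta>"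
proof -
  have "bang_lbl le \<alpha> = bang_lbl le \<beta>"
    using assms event_structure_antisym[OF es] by (auto simp: bang_le_def)
  then show ?thesis
    using assms bang_ev_lbl(2)[OF es] restrict_map_dom[of \<beta>] by (auto simp: bang_le_def)
qed

lemma bang_le_restrictI:
  assumes es: "event_structure E le Con" and ev: "\<beta> \<in> bang_ev E le" "\<gamma> \<in> bang_ev E le"
    and lbl: "le (bang_lbl le \<beta>) (bang_lbl le \<gamma>)"
    and \<beta>: "\<beta> = \<alpha> |` cause le (bang_lbl le \<beta>)" and \<gamma>: "\<gamma> = \<alpha> |` cause le (bang_lbl le \<gamma>)"
  shows "bang_le E le \<beta> \<gamma>"
proof -
  have "cause le (bang_lbl le \<beta>) \<subseteq> cause le (bang_lbl le \<gamma>)"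
    using lbl event_structure_trans[OF es] by (auto simp: cause_def)
  then have "\<beta> = \<gamma> |` cause le (bang_lbl le \<beta>)"
    using \<beta> \<gamma> by (metis inf.absorb_iff2 restrict_restrict)
  then show ?thesis using ev lbl by (simp add: bang_le_def)
qed

lemma bang_le_trans:
  assumes es: "event_structure E le Con" and "bang_le E le \<alpha> \<beta>" "bang_le E le \<beta> \<gamma>"
  shows "bang_le E le \<alpha> \<gamma>"
proof (rule bang_le_restrictI[OF es])
  have lbl: "le (bang_lbl le \<alpha>) (bang_lbl le \<beta>)" "le (bang_lbl le \<beta>) (bang_lbl le \<gamma>)"
    using assms by (auto simp: bang_le_def)
  then show "le (bang_lbl le \<alpha>) (bang_lbl le \<gamma>)" using event_structure_trans[OF es] by blast
  have "cause le (bang_lbl le \<alpha>) \<subseteq> cause le (bang_lbl le \<beta>)"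
    using lbl event_structure_trans[OF es] by (auto simp: cause_def)
  then show "\<alpha> = \<gamma> |` cause le (bang_lbl le \<alpha>)"
    using assms unfolding bang_le_def by (metis inf.absorb_iff2 restrict_restrict)
  show "\<gamma> = \<gamma> |` cause le (bang_lbl le \<gamma>)"
    using assms bang_ev_lbl(2)[OF es] restrict_map_dom[of \<gamma>] by (simp add: bang_le_def)
qed (use assms in \<open>auto simp: bang_le_def\<close>)

lemma bang_le_forest:
  assumes na: "neg_arena E le pol" and "bang_le E le \<beta> \<alpha>" "bang_le E le \<gamma> \<alpha>"
  shows "bang_le E le \<beta> \<gamma> \<or> bang_le E le \<gamma> \<beta>"
proof -
  have es: "event_structure E le {X. finite X \<and> X \<subseteq> E}" using na by (simp add: neg_arena_def)
  have "bang_lbl le \<alpha> \<in> E" using assms bang_ev_lbl(1)[OF es] by (auto simp: bang_le_def)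
  then have "le (bang_lbl le \<beta>) (bang_lbl le \<gamma>) \<or> le (bang_lbl le \<gamma>) (bang_lbl le \<beta>)"
    using na assms unfolding neg_arena_def bang_le_def by blast
  then show ?thesis using assms bang_le_restrictI[OF es] by (auto simp: bang_le_def)
qed

lemma bang_iso_insert:
  assumes es: "event_structure E le Con" and \<theta>: "\<theta> \<in> bang_iso E le"
    and new: "\<alpha> \<notin> Domain \<theta>" "\<alpha>' \<notin> Range \<theta>"
    and conf: "conf (bang_ev E le) (bang_le E le) (bang_Con E le) (insert \<alpha> (Domain \<theta>))"
      "conf (bang_ev E le) (bang_le E le) (bang_Con E le) (insert \<alpha>' (Range \<theta>))"
    and lbl: "bang_lbl le \<alpha>' = bang_lbl le \<alpha>"
    and ord: "\<And>\<gamma> \<gamma>'. (\<gamma>, \<gamma>') \<in> \<theta> \<Longrightarrow> bang_le E le \<gamma> \<alpha> \<longleftrightarrow> bang_le E le \<gamma>' \<alpha>'"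
  shows "insert (\<alpha>, \<alpha>') \<theta> \<in> bang_iso E le"
proof -
  obtain x y where x: "conf (bang_ev E le) (bang_le E le) (bang_Con E le) x"
    and y: "conf (bang_ev E le) (bang_le E le) (bang_Con E le) y"
    and iso: "order_iso_rel (bang_le E le) \<theta> x y"
    and lbls: "\<forall>\<gamma> \<gamma>'. (\<gamma>, \<gamma>') \<in> \<theta> \<longrightarrow> bang_lbl le \<gamma>' = bang_lbl le \<gamma>"
    using \<theta> unfolding bang_iso_def by blast
  then have bij: "bij_rel \<theta> x y" by (simp add: order_iso_rel_def)
  note xy = bij_rel_Domain[OF bij] bij_rel_Range[OF bij]
  have "order_iso_rel (bang_le E le) (insert (\<alpha>, \<alpha>') \<theta>) (insert \<alpha> x) (insert \<alpha>' y)"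
  proof (rule order_iso_rel_insert[OF iso])
    show "downclosed (bang_le E le) x" "downclosed (bang_le E le) y"
      using x y by (auto simp: conf_def)
  qed (use new xy conf ord bang_le_refl[OF es] in \<open>auto simp: conf_def\<close>)
  then show ?thesis
    using conf xy lbls lbl unfolding bang_iso_def by auto
qed

lemma G_le_simps [simp]:
  "G_le EA leA EB leB (Inl \<alpha>) (Inl \<alpha>') = bang_le EA leA \<alpha> \<alpha>'"
  "G_le EA leA EB leB (Inr \<beta>) (Inr \<beta>') = bang_le EB leB \<beta> \<beta>'"
  "G_le EA leA EB leB (Inl \<alpha>) (Inr \<beta>') = False"
  "G_le EA leA EB leB (Inr \<beta>) (Inl \<alpha>') = False"
  by (simp_all add: G_le_def)

lemma G_ev_simps [simp]:
  "Inl \<alpha> \<in> G_ev EA leA EB leB \<longleftrightarrow> \<alpha> \<in> bang_ev EA leA"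
  "Inr \<beta> \<in> G_ev EA leA EB leB \<longleftrightarrow> \<beta> \<in> bang_ev EB leB"
  by (auto simp: G_ev_def)

lemma G_pol_eq_if_G_lbl_eq:
  "G_lbl leA leB a = G_lbl leA leB b \<Longrightarrow> G_pol leA polA leB polB a = G_pol leA polA leB polB b"
  by (cases a; cases b) (auto simp: G_lbl_def G_pol_def)

lemma isl_eq_if_G_lbl_eq: "G_lbl leA leB a = G_lbl leA leB b \<Longrightarrow> isl a = isl b"
  by (cases a; cases b) (auto simp: G_lbl_def)

lemma bang_iso_lbl: "\<theta> \<in> bang_iso E le \<Longrightarrow> (\<alpha>, \<beta>) \<in> \<theta> \<Longrightarrow> bang_lbl le \<beta> = bang_lbl le \<alpha>"
  unfolding bang_iso_def by blast

lemma G_iso_lbl: "\<phi> \<in> G_iso EA leA EB leB \<Longrightarrow> (a, b) \<in> \<phi> \<Longrightarrow> G_lbl leA leB a = G_lbl leA leB b"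
  unfolding G_iso_def by (auto simp: G_lbl_def dest: bang_iso_lbl)

lemma G_iso_order_pres:
  "\<phi> \<in> G_iso EA leA EB leB \<Longrightarrow> order_pres (G_le EA leA EB leB) (G_le EA leA EB leB) \<phi>"
  unfolding G_iso_def bang_iso_def order_iso_rel_def order_pres_def by auto

locale game =
  fixes EA :: "'a set" and leA polA and EB :: "'b set" and leB polB
  assumes arena_A: "neg_arena EA leA polA" and arena_B: "neg_arena EB leB polB"
begin

abbreviation "Gev \<equiv> G_ev EA leA EB leB"
abbreviation "Gle \<equiv> G_le EA leA EB leB"
abbreviation "GCon \<equiv> G_Con EA leA EB leB"
abbreviation "Giso \<equiv> G_iso EA leA EB leB"
abbreviation "Glbl \<equiv> G_lbl leA leB"
abbreviation "Gpol \<equiv> G_pol leA polA leB polB"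

lemma es_A: "event_structure EA leA {X. finite X \<and> X \<subseteq> EA}"
  and es_B: "event_structure EB leB {X. finite X \<and> X \<subseteq> EB}"
  using arena_A arena_B by (simp_all add: neg_arena_def)

lemma G_le_refl: "e \<in> Gev \<Longrightarrow> Gle e e"
  by (cases e) (auto simp: bang_le_refl[OF es_A] bang_le_refl[OF es_B])

lemma G_le_trans: "Gle a b \<Longrightarrow> Gle b c \<Longrightarrow> Gle a c"
  by (cases a; cases b; cases c) (auto intro: bang_le_trans[OF es_A] bang_le_trans[OF es_B])

lemma antisymp_G_le: "antisymp Gle"
proof (rule antisympI)
  fix a b show "Gle a b \<Longrightarrow> Gle b a \<Longrightarrow> a = b"
    by (cases a; cases b) (auto intro: bang_le_antisym[OF es_A] bang_le_antisym[OF es_B])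
qed

lemma G_le_forest: "Gle b a \<Longrightarrow> Gle c a \<Longrightarrow> Gle b c \<or> Gle c b"
  by (cases a; cases b; cases c) (auto dest: bang_le_forest[OF arena_A] bang_le_forest[OF arena_B])

lemma G_le_in_ev: "Gle a b \<Longrightarrow> a \<in> Gev \<and> b \<in> Gev"
  by (cases a; cases b) (auto simp: bang_le_def)

text \<open>In a forest an event has at most one immediate predecessor.\<close>

lemma G_le_imm_iff:
  assumes imm: "imm Gle p e" and ne: "g \<noteq> e"
  shows "Gle g e \<longleftrightarrow> Gle g p"
proof
  assume g: "Gle g e"
  have "Gle p e" using imm by (simp add: imm_def)
  then consider "Gle g p" | "Gle p g" using G_le_forest[OF g] by blast
  then show "Gle g p"
  proof cases
    case 2
    then have "g = p" using imm g ne by (auto simp: imm_def)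
    then show ?thesis using G_le_refl G_le_in_ev 2 by blast
  qed
next
  assume "Gle g p"
  then show "Gle g e" using imm G_le_trans by (auto simp: imm_def)
qed

lemma G_minA_iff: "G_minA EA leA e \<longleftrightarrow> isl e \<and> e \<in> Gev \<and> is_min Gle e"
proof (cases e)
  case (Inl \<alpha>)
  have "is_min Gle (Inl \<alpha>) \<longleftrightarrow> is_min (bang_le EA leA) \<alpha>"
    unfolding is_min_def by (metis G_le_simps(1,4) sum.inject(1) obj_sumE)
  then show ?thesis using Inl by (simp add: G_minA_def)
qed (simp add: G_minA_def)

lemma conf_vimage_Inl:
  "conf Gev Gle GCon Z \<Longrightarrow> conf (bang_ev EA leA) (bang_le EA leA) (bang_Con EA leA) (Inl -` Z)"
  unfolding conf_def downclosed_def bang_Con_def G_ev_def by (force intro: finite_vimageI)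

lemma conf_vimage_Inr:
  "conf Gev Gle GCon Z \<Longrightarrow> conf (bang_ev EB leB) (bang_le EB leB) (bang_Con EB leB) (Inr -` Z)"
  unfolding conf_def downclosed_def bang_Con_def G_ev_def by (force intro: finite_vimageI)

lemma G_iso_insert_Inl:
  assumes \<phi>: "\<phi> = map_prod Inl Inl ` \<theta>A \<union> map_prod Inr Inr ` \<theta>B"
    and \<theta>A: "\<theta>A \<in> bang_iso EA leA" and \<theta>B: "\<theta>B \<in> bang_iso EB leB"
    and new: "Inl \<alpha> \<notin> Domain \<phi>" "Inl \<alpha>' \<notin> Range \<phi>"
    and conf: "conf Gev Gle GCon (insert (Inl \<alpha>) (Domain \<phi>))"
      "conf Gev Gle GCon (insert (Inl \<alpha>') (Range \<phi>))"
    and lbl: "bang_lbl leA \<alpha>' = bang_lbl leA \<alpha>"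
    and ord: "\<And>a b. (a, b) \<in> \<phi> \<Longrightarrow> Gle a (Inl \<alpha>) \<longleftrightarrow> Gle b (Inl \<alpha>')"
  shows "insert (Inl \<alpha>, Inl \<alpha>') \<phi> \<in> Giso"
proof -
  have "insert (\<alpha>, \<alpha>') \<theta>A \<in> bang_iso EA leA"
  proof (rule bang_iso_insert[OF es_A \<theta>A _ _ _ _ lbl])
    show "\<alpha> \<notin> Domain \<theta>A" "\<alpha>' \<notin> Range \<theta>A" using new \<phi> by force+
    have "insert \<alpha> (Domain \<theta>A) = Inl -` insert (Inl \<alpha>) (Domain \<phi>)"
      "insert \<alpha>' (Range \<theta>A) = Inl -` insert (Inl \<alpha>') (Range \<phi>)"
      using \<phi> by force+
    then show "conf (bang_ev EA leA) (bang_le EA leA) (bang_Con EA leA) (insert \<alpha> (Domain \<theta>A))"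
      "conf (bang_ev EA leA) (bang_le EA leA) (bang_Con EA leA) (insert \<alpha>' (Range \<theta>A))"
      using conf_vimage_Inl[OF conf(1)] conf_vimage_Inl[OF conf(2)] by simp_all
    show "bang_le EA leA \<gamma> \<alpha> \<longleftrightarrow> bang_le EA leA \<gamma>' \<alpha>'" if "(\<gamma>, \<gamma>') \<in> \<theta>A" for \<gamma> \<gamma>'
      using ord[of "Inl \<gamma>" "Inl \<gamma>'"] that \<phi> by force
  qed
  moreover have "insert (Inl \<alpha>, Inl \<alpha>') \<phi> =
      map_prod Inl Inl ` insert (\<alpha>, \<alpha>') \<theta>A \<union> map_prod Inr Inr ` \<theta>B"
    using \<phi> by auto
  ultimately show ?thesis using \<theta>B unfolding G_iso_def by blast
qed

lemma G_iso_insert_Inr: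
  assumes \<phi>: "\<phi> = map_prod Inl Inl ` \<theta>A \<union> map_prod Inr Inr ` \<theta>B"
    and \<theta>A: "\<theta>A \<in> bang_iso EA leA" and \<theta>B: "\<theta>B \<in> bang_iso EB leB"
    and new: "Inr \<beta> \<notin> Domain \<phi>" "Inr \<beta>' \<notin> Range \<phi>"
    and conf: "conf Gev Gle GCon (insert (Inr \<beta>) (Domain \<phi>))"
      "conf Gev Gle GCon (insert (Inr \<beta>') (Range \<phi>))"
    and lbl: "bang_lbl leB \<beta>' = bang_lbl leB \<beta>"
    and ord: "\<And>a b. (a, b) \<in> \<phi> \<Longrightarrow> Gle a (Inr \<beta>) \<longleftrightarrow> Gle b (Inr \<beta>')"
  shows "insert (Inr \<beta>, Inr \<beta>') \<phi> \<in> Giso"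
proof -
  have "insert (\<beta>, \<beta>') \<theta>B \<in> bang_iso EB leB"
  proof (rule bang_iso_insert[OF es_B \<theta>B _ _ _ _ lbl])
    show "\<beta> \<notin> Domain \<theta>B" "\<beta>' \<notin> Range \<theta>B" using new \<phi> by force+
    have "insert \<beta> (Domain \<theta>B) = Inr -` insert (Inr \<beta>) (Domain \<phi>)"
      "insert \<beta>' (Range \<theta>B) = Inr -` insert (Inr \<beta>') (Range \<phi>)"
      using \<phi> by force+
    then show "conf (bang_ev EB leB) (bang_le EB leB) (bang_Con EB leB) (insert \<beta> (Domain \<theta>B))"
      "conf (bang_ev EB leB) (bang_le EB leB) (bang_Con EB leB) (insert \<beta>' (Range \<theta>B))"
      using conf_vimage_Inr[OF conf(1)] conf_vimage_Inr[OF conf(2)] by simp_all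
    show "bang_le EB leB \<gamma> \<beta> \<longleftrightarrow> bang_le EB leB \<gamma>' \<beta>'" if "(\<gamma>, \<gamma>') \<in> \<theta>B" for \<gamma> \<gamma>'
      using ord[of "Inr \<gamma>" "Inr \<gamma>'"] that \<phi> by force
  qed
  moreover have "insert (Inr \<beta>, Inr \<beta>') \<phi> =
      map_prod Inl Inl ` \<theta>A \<union> map_prod Inr Inr ` insert (\<beta>, \<beta>') \<theta>B"
    using \<phi> by auto
  ultimately show ?thesis using \<theta>A unfolding G_iso_def by blast
qed

lemma G_iso_insert:
  assumes \<phi>: "\<phi> \<in> Giso" and new: "e \<notin> Domain \<phi>" "e' \<notin> Range \<phi>"
    and conf: "conf Gev Gle GCon (insert e (Domain \<phi>))" "conf Gev Gle GCon (insert e' (Range \<phi>))"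
    and lbl: "Glbl e = Glbl e'"
    and ord: "\<And>a b. (a, b) \<in> \<phi> \<Longrightarrow> Gle a e \<longleftrightarrow> Gle b e'"
  shows "insert (e, e') \<phi> \<in> Giso"
proof -
  obtain \<theta>A \<theta>B where \<phi>_eq: "\<phi> = map_prod Inl Inl ` \<theta>A \<union> map_prod Inr Inr ` \<theta>B"
    and \<theta>A: "\<theta>A \<in> bang_iso EA leA" and \<theta>B: "\<theta>B \<in> bang_iso EB leB"
    using \<phi> unfolding G_iso_def by blast
  show ?thesis
  proof (cases e; cases e')
    fix \<alpha> \<alpha>' assume "e = Inl \<alpha>" "e' = Inl \<alpha>'"
    then show ?thesis
      using G_iso_insert_Inl[OF \<phi>_eq \<theta>A \<theta>B] assms by (simp add: G_lbl_def)
  next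
    fix \<beta> \<beta>' assume "e = Inr \<beta>" "e' = Inr \<beta>'"
    then show ?thesis
      using G_iso_insert_Inr[OF \<phi>_eq \<theta>A \<theta>B] assms by (simp add: G_lbl_def)
  qed (use lbl in \<open>simp_all add: G_lbl_def\<close>)
qed

end

section \<open>Deterministic sequential innocent strategies\<close>

locale seq_innocent_strategy = game EA leA polA EB leB polB
  for EA :: "'a set" and leA polA and EB :: "'b set" and leB polB +
  fixes ES :: "'s set" and leS ConS polS IsoS and \<sigma> :: "'s \<Rightarrow> ('a, 'b) gev"
  assumes strategy: "tilde_strategy ES leS ConS polS IsoS
           (G_ev EA leA EB leB) (G_le EA leA EB leB) (G_Con EA leA EB leB)
           (G_pol leA polA leB polB) (G_iso EA leA EB leB) \<sigma>"
    and negative: "negative_strat ES leS polS"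
    and deterministic: "deterministic ES ConS"
    and seq_innocent: "sequential_innocent ES leS ConS polS"
begin

lemma ess_S: "ess ES leS ConS IsoS"
  using strategy by (simp add: tilde_strategy_def)

lemma es_S: "event_structure ES leS ConS"
  using ess_S by (simp add: ess_def)

lemma map_essp_\<sigma>: "map_essp ES leS ConS polS IsoS Gev Gle GCon Gpol Giso \<sigma>"
  using strategy by (simp add: tilde_strategy_def)

lemma \<sigma>_in_Gev: "x \<in> ES \<Longrightarrow> \<sigma> x \<in> Gev"
  and conf_\<sigma>_image: "conf ES leS ConS X \<Longrightarrow> conf Gev Gle GCon (\<sigma> ` X)"
  and inj_on_\<sigma>: "conf ES leS ConS X \<Longrightarrow> inj_on \<sigma> X"
  and Gpol_\<sigma>: "x \<in> ES \<Longrightarrow> Gpol (\<sigma> x) = polS x"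
  and \<sigma>_iso: "\<theta> \<in> IsoS \<Longrightarrow> map_prod \<sigma> \<sigma> ` \<theta> \<in> Giso"
  using map_essp_\<sigma> by (simp_all add: map_essp_def)

lemma imm_\<sigma>: "imm leS a b \<Longrightarrow> polS a \<or> \<not> polS b \<Longrightarrow> imm Gle (\<sigma> a) (\<sigma> b)"
  using strategy unfolding tilde_strategy_def courteous_def by blast

lemma strong_receptive_\<sigma>: "strong_receptive IsoS Gpol Giso \<sigma>"
  using strategy by (simp add: tilde_strategy_def)

lemma cause_linear: "x \<in> ES \<Longrightarrow> leS a x \<Longrightarrow> leS b x \<Longrightarrow> leS a b \<or> leS b a"
  using seq_innocent by (simp add: sequential_innocent_def backward_sequential_def)

lemma forward_seq:
  "imm leS x y1 \<Longrightarrow> imm leS x y2 \<Longrightarrow> y1 \<noteq> y2 \<Longrightarrow> polS y1 \<Longrightarrow> polS y2 \<Longrightarrow>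
   \<not> conf ES leS ConS (cause leS y1 \<union> cause leS y2)"
  using seq_innocent by (simp add: sequential_innocent_def forward_sequential_def)

lemma conf_cause_S: "e \<in> ES \<Longrightarrow> conf ES leS ConS (cause leS e)"
proof -
  assume e: "e \<in> ES"
  have "cause leS e \<subseteq> ES" using event_structure_le_E[OF es_S] by (auto simp: cause_def)
  then show ?thesis
    using deterministic event_structure_finite_cause[OF es_S e] downclosed_cause[OF es_S]
    by (simp add: conf_def deterministic_def)
qed

lemma conf_Un: "conf ES leS ConS x \<Longrightarrow> conf ES leS ConS y \<Longrightarrow> conf ES leS ConS (x \<union> y)"
  using deterministic by (auto simp: conf_def downclosed_def deterministic_def)

lemma \<sigma>_eq_imp_eq:
  assumes x: "conf ES leS ConS x" and u: "u \<in> x" and e: "e \<in> ES" and eq: "\<sigma> u = \<sigma> e"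
  shows "u = e"
proof -
  have "e \<in> cause leS e" using event_structure_refl[OF es_S e] by (simp add: cause_def)
  then show ?thesis
    using inj_onD[OF inj_on_\<sigma>[OF conf_Un[OF x conf_cause_S[OF e]]] eq] u by blast
qed

lemma Gle_\<sigma>_imm_iff:
  assumes "imm leS p e" "\<not> polS e" "g \<noteq> \<sigma> e"
  shows "Gle g (\<sigma> e) \<longleftrightarrow> Gle g (\<sigma> p)"
  using G_le_imm_iff[OF imm_\<sigma>] assms by blast

end

locale seq_innocent_strategy_pair = seq_innocent_strategy +
  fixes s s' :: 's
  assumes s_in_ES: "s \<in> ES" and s'_in_ES: "s' \<in> ES"
    and same_height: "card (cause leS s) = card (cause leS s')"
begin

sublocale equal_height_chains ES leS ConS s s'
  using es_S s_in_ES s'_in_ES cause_linear same_height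
  by unfold_locales blast+

abbreviation "pre \<equiv> chain_prefix leS s s'"

lemma c_in_ES: "i < n \<Longrightarrow> c i \<in> ES"
  using A.chain_at_in_E .

lemma d_in_ES: "i < n \<Longrightarrow> d i \<in> ES"
  using B.chain_at_in_E same_height by simp

lemma \<sigma>_c_inj: "i < n \<Longrightarrow> j < n \<Longrightarrow> \<sigma> (c i) = \<sigma> (c j) \<longleftrightarrow> i = j"
  using inj_onD[OF inj_on_\<sigma>[OF conf_cause_S[OF s_in_ES]]] A.chain_at_in_cause A.chain_at_inj
  by blast

lemma \<sigma>_d_inj: "i < n \<Longrightarrow> j < n \<Longrightarrow> \<sigma> (d i) = \<sigma> (d j) \<longleftrightarrow> i = j"
  using inj_onD[OF inj_on_\<sigma>[OF conf_cause_S[OF s'_in_ES]]] B.chain_at_in_cause B.chain_at_inj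
    same_height by (metis (no_types, lifting))

lemma Domain_\<sigma>_pre: "Domain (map_prod \<sigma> \<sigma> ` pre k) = \<sigma> ` c ` {..<k}"
  and Range_\<sigma>_pre: "Range (map_prod \<sigma> \<sigma> ` pre k) = \<sigma> ` d ` {..<k}"
  by (force simp: chain_prefix_def)+

text \<open>Courtesy makes the immediate predecessor of a negative event visible in the game,
  where it is the only immediate predecessor; so below a negative step the causal
  order is read off the previous step, on which the symmetry already acts.\<close>

lemma Gle_\<sigma>_chain_iff:
  assumes i: "i < k" and k: "k < n" and pre: "pre k \<in> IsoS"
    and neg: "\<not> polS (c k)" "\<not> polS (d k)"
  shows "Gle (\<sigma> (c i)) (\<sigma> (c k)) \<longleftrightarrow> Gle (\<sigma> (d i)) (\<sigma> (d k))"
proof -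
  obtain m where m: "k = Suc m" using i by (cases k) auto
  have "Gle (\<sigma> (c i)) (\<sigma> (c k)) \<longleftrightarrow> Gle (\<sigma> (c i)) (\<sigma> (c m))"
    using Gle_\<sigma>_imm_iff[OF A.imm_chain_at_Suc neg(1)[unfolded m]] \<sigma>_c_inj i k m by simp
  also have "\<dots> \<longleftrightarrow> Gle (\<sigma> (d i)) (\<sigma> (d m))"
    using G_iso_order_pres[OF \<sigma>_iso[OF pre]] i m unfolding order_pres_def
    by (fastforce simp: chain_prefix_def)
  also have "\<dots> \<longleftrightarrow> Gle (\<sigma> (d i)) (\<sigma> (d k))"
    using Gle_\<sigma>_imm_iff[OF B.imm_chain_at_Suc neg(2)[unfolded m]] \<sigma>_d_inj i k m same_height
    by simp
  finally show ?thesis .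
qed

lemma \<sigma>_pre_insert_in_Giso:
  assumes k: "k < n" and pre: "pre k \<in> IsoS"
    and neg: "\<not> polS (c k)" "\<not> polS (d k)" and lbl: "Glbl (\<sigma> (c k)) = Glbl (\<sigma> (d k))"
  shows "insert (\<sigma> (c k), \<sigma> (d k)) (map_prod \<sigma> \<sigma> ` pre k) \<in> Giso"
proof (rule G_iso_insert[OF \<sigma>_iso[OF pre] _ _ _ _ lbl])
  show "\<sigma> (c k) \<notin> Domain (map_prod \<sigma> \<sigma> ` pre k)" "\<sigma> (d k) \<notin> Range (map_prod \<sigma> \<sigma> ` pre k)"
    using \<sigma>_c_inj \<sigma>_d_inj k by (auto simp: Domain_\<sigma>_pre Range_\<sigma>_pre)
  have "insert (\<sigma> (c k)) (Domain (map_prod \<sigma> \<sigma> ` pre k)) = \<sigma> ` cause leS (c k)"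
    "insert (\<sigma> (d k)) (Range (map_prod \<sigma> \<sigma> ` pre k)) = \<sigma> ` cause leS (d k)"
    using k same_height
    by (auto simp: Domain_\<sigma>_pre Range_\<sigma>_pre A.cause_chain_at B.cause_chain_at
      lessThan_Suc_atMost[symmetric] lessThan_Suc)
  then show "conf Gev Gle GCon (insert (\<sigma> (c k)) (Domain (map_prod \<sigma> \<sigma> ` pre k)))"
    "conf Gev Gle GCon (insert (\<sigma> (d k)) (Range (map_prod \<sigma> \<sigma> ` pre k)))"
    using conf_\<sigma>_image[OF conf_cause_S] c_in_ES d_in_ES k by simp_all
  show "Gle a (\<sigma> (c k)) \<longleftrightarrow> Gle b (\<sigma> (d k))" if "(a, b) \<in> map_prod \<sigma> \<sigma> ` pre k" for a b
    using that Gle_\<sigma>_chain_iff[OF _ k pre neg] by (auto simp: chain_prefix_def)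
qed

lemma polS_chain_eq:
  assumes "i < n" and "Glbl (\<sigma> (c i)) = Glbl (\<sigma> (d i))"
  shows "polS (c i) \<longleftrightarrow> polS (d i)"
  using G_pol_eq_if_G_lbl_eq[OF assms(2)] Gpol_\<sigma> c_in_ES d_in_ES assms(1) by metis

lemma pre_Suc_in_IsoS_negative:
  assumes k: "k < n" and pre: "pre k \<in> IsoS" and neg: "\<not> polS (c k)"
    and lbl: "Glbl (\<sigma> (c k)) = Glbl (\<sigma> (d k))"
  shows "pre (Suc k) \<in> IsoS"
proof -
  have neg': "\<not> polS (d k)" using neg polS_chain_eq[OF k lbl] by simp
  have pol: "\<not> Gpol (\<sigma> (c k))" "\<not> Gpol (\<sigma> (d k))"
    using neg neg' Gpol_\<sigma> c_in_ES d_in_ES k by simp_all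
  have new: "\<sigma> (c k) \<notin> Domain (map_prod \<sigma> \<sigma> ` pre k)"
    using \<sigma>_c_inj k by (auto simp: Domain_\<sigma>_pre)
  obtain p where p: "insert p (pre k) \<in> IsoS"
    and \<sigma>p: "\<sigma> (fst p) = \<sigma> (c k)" "\<sigma> (snd p) = \<sigma> (d k)"
    using ex1_implies_ex[OF strong_receptive_\<sigma>[unfolded strong_receptive_def, rule_format,
          OF pre pol new \<sigma>_pre_insert_in_Giso[OF k pre neg neg' lbl]]]
    by blast
  have "fst p = c k"
    using \<sigma>_eq_imp_eq[OF iso_conf_Domain[OF ess_S p] _ c_in_ES[OF k] \<sigma>p(1)] by (cases p) auto
  moreover have "snd p = d k"
    using \<sigma>_eq_imp_eq[OF iso_conf_Range[OF ess_S p] _ d_in_ES[OF k] \<sigma>p(2)] by (cases p) auto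
  ultimately show ?thesis using p by (cases p) (simp add: chain_prefix_Suc)
qed

lemma chain_at_0_negative: "0 < n \<Longrightarrow> \<not> polS (c 0)"
  using negative A.is_min_chain_at_0 c_in_ES by (simp add: negative_strat_def)

lemma insert_Domain_pre: "k < n \<Longrightarrow> insert (c k) (Domain (pre k)) = cause leS (c k)"
  by (simp add: Domain_chain_prefix A.cause_chain_at lessThan_Suc_atMost[symmetric] lessThan_Suc)

lemma pre_Suc_in_IsoS_positive:
  assumes k: "k < n" and pre: "pre k \<in> IsoS" and pos: "polS (c k)" "polS (d k)"
  shows "pre (Suc k) \<in> IsoS"
proof -
  obtain m where m: "k = Suc m" using chain_at_0_negative pos k by (cases k) auto
  have dom: "Domain (insert (c k, t) (pre k)) = cause leS (c k)" for t
    using insert_Domain_pre[OF k] by simp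
  have "c k \<notin> Domain (pre k)" using A.chain_at_inj k by (auto simp: Domain_chain_prefix)
  then obtain t where t: "insert (c k, t) (pre k) \<in> IsoS" and t_new: "t \<notin> Range (pre k)"
    using iso_extend_one[OF ess_S pre] insert_Domain_pre[OF k] conf_cause_S[OF c_in_ES[OF k]]
    by metis
  have "Range (insert (c k, t) (pre k)) = cause leS t"
    using iso_Range_eq_cause[OF ess_S t dom] by simp
  then have cause_t: "cause leS t = insert t (cause leS (d m))"
    using k m same_height by (simp add: Range_chain_prefix B.cause_chain_at lessThan_Suc_atMost)
  have t_in: "t \<in> ES" using iso_conf_Range[OF ess_S t] by (auto simp: conf_def)
  have "imm leS (d m) t"
  proof (rule imm_if_cause_eq_insert[OF es_S d_in_ES cause_t])
    show "m < n" using k m by simp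
    show "t \<notin> cause leS (d m)"
      using t_new k m same_height
      by (simp add: Range_chain_prefix B.cause_chain_at lessThan_Suc_atMost)
  qed
  moreover have "imm leS (d m) (d k)" using B.imm_chain_at_Suc k m same_height by simp
  moreover have "polS t"
  proof -
    have "Glbl (\<sigma> (c k)) = Glbl (\<sigma> t)" using G_iso_lbl[OF \<sigma>_iso[OF t]] by simp
    then show ?thesis
      using G_pol_eq_if_G_lbl_eq Gpol_\<sigma> c_in_ES[OF k] t_in pos(1) by metis
  qed
  moreover have "conf ES leS ConS (cause leS t \<union> cause leS (d k))"
    using conf_Un conf_cause_S t_in d_in_ES k by simp
  ultimately have "t = d k" using forward_seq pos(2) by blast
  then show ?thesis using t by (simp add: chain_prefix_Suc)
qed

lemma pre_in_IsoS_if_labels_eq: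
  assumes lbl: "\<And>i. i < n \<Longrightarrow> Glbl (\<sigma> (c i)) = Glbl (\<sigma> (d i))"
  shows "pre n \<in> IsoS"
proof -
  have "pre k \<in> IsoS" if "k \<le> n" for k
    using that
  proof (induction k)
    case 0
    then show ?case
      using iso_Id_on[OF ess_S, of "{}"] es_S
      by (simp add: chain_prefix_0 conf_def downclosed_def event_structure_def)
  next
    case (Suc k)
    then have k: "k < n" and pre: "pre k \<in> IsoS" by simp_all
    show ?case
      using pre_Suc_in_IsoS_positive[OF k pre] pre_Suc_in_IsoS_negative[OF k pre _ lbl[OF k]]
        polS_chain_eq[OF k lbl[OF k]] by blast
  qed
  then show ?thesis by simp
qed

lemma pointing_seq_eq:
  "pointing_seq EA leA EB leB leS \<sigma> s' =
    (map (\<lambda>i. Glbl (\<sigma> (d i))) [0..<n],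
     {(i, j). i < n \<and> j < n \<and> (imm Gle (\<sigma> (d j)) (\<sigma> (d i)) \<or> (j = 0 \<and> G_minA EA leA (\<sigma> (d i))))})"
  "pointing_seq EA leA EB leB leS \<sigma> s =
    (map (\<lambda>i. Glbl (\<sigma> (c i))) [0..<n],
     {(i, j). i < n \<and> j < n \<and> (imm Gle (\<sigma> (c j)) (\<sigma> (c i)) \<or> (j = 0 \<and> G_minA EA leA (\<sigma> (c i))))})"
  by (simp_all add: pointing_seq_def Let_def same_height)

lemma labels_eq_if_pointing_seq_eq:
  "pointing_seq EA leA EB leB leS \<sigma> s = pointing_seq EA leA EB leB leS \<sigma> s' \<Longrightarrow>
    i < n \<Longrightarrow> Glbl (\<sigma> (c i)) = Glbl (\<sigma> (d i))"
  by (simp add: pointing_seq_eq map_eq_conv)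

lemma pointing_seq_eq_if_\<sigma>_pre_in_Giso:
  assumes \<phi>: "map_prod \<sigma> \<sigma> ` pre n \<in> Giso"
  shows "pointing_seq EA leA EB leB leS \<sigma> s = pointing_seq EA leA EB leB leS \<sigma> s'"
proof -
  let ?\<phi> = "map_prod \<sigma> \<sigma> ` pre n"
  have pair: "i < n \<Longrightarrow> (\<sigma> (c i), \<sigma> (d i)) \<in> ?\<phi>" for i by (force simp: chain_prefix_def)
  have bij: "bij_rel (pre n) (cause leS s) (cause leS s')"
    using order_iso_rel_chain_prefix by (simp add: order_iso_rel_def)
  have "Domain ?\<phi> = \<sigma> ` cause leS s" "Range ?\<phi> = \<sigma> ` cause leS s'"
    using bij_rel_Domain[OF bij] bij_rel_Range[OF bij] by force+
  moreover have "conf Gev Gle GCon (\<sigma> ` cause leS s)" "conf Gev Gle GCon (\<sigma> ` cause leS s')"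
    using conf_\<sigma>_image[OF conf_cause_S] s_in_ES s'_in_ES by simp_all
  ultimately have down: "downclosed Gle (Domain ?\<phi>)" "downclosed Gle (Range ?\<phi>)"
    and "Field ?\<phi> \<subseteq> Gev"
    by (auto simp: conf_def Field_def)
  then have refl: "reflp_on (Field ?\<phi>) Gle" using G_le_refl by (auto simp: reflp_on_def)
  note iff = G_iso_order_pres[OF \<phi>] refl antisymp_G_le down
  have lbl: "Glbl (\<sigma> (c i)) = Glbl (\<sigma> (d i))" if "i < n" for i
    using G_iso_lbl[OF \<phi> pair[OF that]] .
  have imm: "imm Gle (\<sigma> (c j)) (\<sigma> (c i)) \<longleftrightarrow> imm Gle (\<sigma> (d j)) (\<sigma> (d i))"
    if "j < n" "i < n" for i j
    using order_pres_imm_iff[OF iff pair pair] that .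
  have min: "G_minA EA leA (\<sigma> (c i)) \<longleftrightarrow> G_minA EA leA (\<sigma> (d i))" if "i < n" for i
    using order_pres_is_min_iff[OF iff pair[OF that]] isl_eq_if_G_lbl_eq[OF lbl[OF that]]
      \<sigma>_in_Gev c_in_ES d_in_ES that
    unfolding G_minA_iff by blast
  show ?thesis
    using lbl imm min by (auto simp: pointing_seq_eq map_eq_conv)
qed

end

theorem mainTheorem14:
  fixes EA :: "'a set" and leA :: "'a \<Rightarrow> 'a \<Rightarrow> bool" and polA :: "'a \<Rightarrow> bool"
    and EB :: "'b set" and leB :: "'b \<Rightarrow> 'b \<Rightarrow> bool" and polB :: "'b \<Rightarrow> bool"
    and ES :: "'s set" and leS :: "'s \<Rightarrow> 's \<Rightarrow> bool" and ConS :: "'s set set"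
    and polS :: "'s \<Rightarrow> bool" and IsoS :: "('s \<times> 's) set set"
    and \<sigma> :: "'s \<Rightarrow> ('a, 'b) gev" and s s' :: 's
  assumes "neg_arena EA leA polA"
    and "neg_arena EB leB polB"
    and "tilde_strategy ES leS ConS polS IsoS
           (G_ev EA leA EB leB) (G_le EA leA EB leB) (G_Con EA leA EB leB)
           (G_pol leA polA leB polB) (G_iso EA leA EB leB) \<sigma>"
    and "negative_strat ES leS polS"
    and "deterministic ES ConS"
    and "sequential_innocent ES leS ConS polS"
    and "s \<in> ES" and "s' \<in> ES"
    and "card (cause leS s) = card (cause leS s')"
  shows "(pointing_seq EA leA EB leB leS \<sigma> s = pointing_seq EA leA EB leB leS \<sigma> s'
            \<longleftrightarrow> chain_iso leS s s' \<in> IsoS)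
       \<and> (chain_iso leS s s' \<in> IsoS
            \<longleftrightarrow> map_prod \<sigma> \<sigma> ` chain_iso leS s s' \<in> G_iso EA leA EB leB)"
proof -
  interpret seq_innocent_strategy_pair EA leA polA EB leB polB ES leS ConS polS IsoS \<sigma> s s'
    using assms by unfold_locales (simp_all add: seq_innocent_strategy_def game_def)
  show ?thesis
    unfolding chain_iso_eq_chain_prefix
    using pre_in_IsoS_if_labels_eq labels_eq_if_pointing_seq_eq
      pointing_seq_eq_if_\<sigma>_pre_in_Giso \<sigma>_iso by blast
qed

end
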